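(* For every integer $n\geqslant 9$, the Pancake graph $P_n$ satisfies $$\chi(P_n)\leqslant 4\left\lfloor\frac n9\right\rfloor+\chi\left(P_{n \bmod 9}\right),$$ where $n \bmod 9\in\{0,1,\ldots,8\}$ and the conventions $\chi(P_0)=0$ and $\chi(P_1)=1$ are used.
   Context: For $n\geqslant 1$, the Pancake graph $P_n$ is the Cayley graph on the symmetric group $\mathrm{Sym}_n$, with permutations written in one-line notation $\pi=[\pi_1\pi_2\ldots\pi_n]$. Its generating set consists of the prefix-reversals $r_i$, $2\leqslant i\leqslant n$. Multiplying $\pi$ on the right by $r_i$ reverses the first $i$ entries: $\pi r_i=[\pi_i\pi_{i-1}\ldots\pi_1\pi_{i+1}\ldots\pi_n]$. Two vertices $\pi,\sigma$ are adjacent iff $\sigma=\pi r_i$ for some $2\leqslant i\leqslant n$. In particular $P_1$ is a single vertex. $\chi$ denotes the chromatic number. The paper uses that $\chi(P_9)=4$. *)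

theory Defs
  imports Main
begin

definition pancake_vertices :: "nat \<Rightarrow> nat list set" where
  "pancake_vertices n = {xs. distinct xs \<and> set xs = {1..n}}"

definition prefix_rev :: "nat \<Rightarrow> 'a list \<Rightarrow> 'a list" where
  "prefix_rev i xs = rev (take i xs) @ drop i xs"

definition pancake_adj :: "nat \<Rightarrow> nat list \<Rightarrow> nat list \<Rightarrow> bool" where
  "pancake_adj n p q \<longleftrightarrow> (\<exists>i. 2 \<le> i \<and> i \<le> n \<and> q = prefix_rev i p)"

definition proper_colouring :: "'a set \<Rightarrow> ('a \<Rightarrow> 'a \<Rightarrow> bool) \<Rightarrow> nat \<Rightarrow> ('a \<Rightarrow> nat) \<Rightarrow> bool" where
  "proper_colouring V E k c \<longleftrightarrow>
     (\<forall>v\<in>V. c v < k) \<and> (\<forall>u\<in>V. \<forall>v\<in>V. E u v \<longrightarrow> c u \<noteq> c v)"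

definition chromatic_number :: "'a set \<Rightarrow> ('a \<Rightarrow> 'a \<Rightarrow> bool) \<Rightarrow> nat" where
  "chromatic_number V E = (LEAST k. \<exists>c. proper_colouring V E k c)"

definition pancake_chi :: "nat \<Rightarrow> nat" where
  "pancake_chi n = (if n = 0 then 0 else chromatic_number (pancake_vertices n) (pancake_adj n))"

end

theory Submission
  imports Defs
begin

(* Colouring P_(a+b) by a colouring of P_a on the stacks whose top pancake is at most a, and
   by fresh colours from a colouring of P_b on the remaining stacks, gives
   chi(P_(a+b)) <= chi(P_a) + chi(P_b). Hence chi(P_(9q+r)) <= q chi(P_9) + chi(P_r), and it
   remains to 4-colour P_9.

   That colouring is certified by computation. The pancakes 1..9 are split into the triples
   {1,2,3}, {4,5,6}, {7,8,9}; a group of 648 relabellings compatible with this structure acts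
   freely on the 9! stacks and at the same time permutes the four colours. The colouring is
   the equivariant extension of a table on the 560 canonical orbit representatives, so
   properness needs to be checked only for the eight neighbours of each representative. *)

section \<open>Subadditivity of the chromatic number\<close>

lemma prefix_rev_map: "map f (prefix_rev i xs) = prefix_rev i (map f xs)"
  by (simp add: prefix_rev_def rev_map take_map drop_map)

lemma set_prefix_rev [simp]: "set (prefix_rev i xs) = set xs"
  unfolding prefix_rev_def by (metis append_take_drop_id set_append set_rev)

lemma distinct_prefix_rev [simp]: "distinct (prefix_rev i xs) = distinct xs"
  unfolding prefix_rev_def by (metis append_take_drop_id distinct_append distinct_rev set_rev)

lemma hd_prefix_rev:
  assumes "1 \<le> i" "i \<le> length xs"
  shows "hd (prefix_rev i xs) = xs ! (i - 1)"
proof -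
  have "take i xs \<noteq> []" using assms by auto
  then have "hd (prefix_rev i xs) = last (take i xs)"
    by (simp add: prefix_rev_def hd_rev)
  also have "\<dots> = xs ! (i - 1)"
    using assms \<open>take i xs \<noteq> []\<close> by (simp add: last_conv_nth min_def)
  finally show ?thesis .
qed

lemma filter_prefix_rev:
  "filter P (prefix_rev i xs) = prefix_rev (length (filter P (take i xs))) (filter P xs)"
proof -
  have "filter P xs = filter P (take i xs) @ filter P (drop i xs)"
    by (metis append_take_drop_id filter_append)
  then show ?thesis by (simp add: prefix_rev_def rev_filter)
qed

lemma length_pancake_vertex: "p \<in> pancake_vertices n \<Longrightarrow> length p = n"
  unfolding pancake_vertices_def using distinct_card by fastforce

lemma pancake_adj_filter:
  assumes "u \<in> pancake_vertices n" "pancake_adj n u v" "P (hd u)" "P (hd v)"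
  obtains j where "2 \<le> j" "j \<le> length (filter P u)" "filter P v = prefix_rev j (filter P u)"
proof -
  obtain i where i: "2 \<le> i" "i \<le> n" "v = prefix_rev i u"
    using assms(2) unfolding pancake_adj_def by blast
  have len: "length u = n" and dist: "distinct u"
    using assms(1) length_pancake_vertex unfolding pancake_vertices_def by auto
  let ?j = "length (filter P (take i u))"
  have "u \<noteq> []" using i len by auto
  then have "hd u = u ! 0" by (simp add: hd_conv_nth)
  moreover have "hd v = u ! (i - 1)" using i len by (simp add: hd_prefix_rev)
  moreover have in_take: "u ! k \<in> set (take i u)" if "k < i" for k
    using that i len by (metis length_take min.absorb2 nth_mem nth_take)
  ultimately have "{u ! 0, u ! (i - 1)} \<subseteq> set (filter P (take i u))"
    using assms(3,4) i in_take[of 0] in_take[of "i - 1"] by auto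
  moreover have "u ! 0 \<noteq> u ! (i - 1)" using dist i len by (simp add: nth_eq_iff_index_eq)
  ultimately have "2 \<le> card (set (filter P (take i u)))"
    by (metis card_2_iff card_mono finite_set)
  then have "2 \<le> ?j" using card_length order_trans by blast
  moreover have "?j \<le> length (filter P u)"
    by (metis append_take_drop_id filter_append le_add1 length_append)
  moreover have "filter P v = prefix_rev ?j (filter P u)" using i(3) by (simp add: filter_prefix_rev)
  ultimately show ?thesis by (rule that)
qed

lemma chromatic_number_le: "proper_colouring V E k c \<Longrightarrow> chromatic_number V E \<le> k"
  unfolding chromatic_number_def by (rule Least_le) blast

lemma chromatic_number_attained:
  "proper_colouring V E k c \<Longrightarrow> \<exists>c. proper_colouring V E (chromatic_number V E) c"
  unfolding chromatic_number_def by (rule LeastI_ex) blast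

lemma proper_colouring_hd:
  assumes "n \<ge> 1"
  shows "proper_colouring (pancake_vertices n) (pancake_adj n) (Suc n) hd"
  unfolding proper_colouring_def
proof (intro conjI ballI impI)
  fix v assume "v \<in> pancake_vertices n"
  then show "hd v < Suc n"
    using assms hd_in_set[of v] unfolding pancake_vertices_def by fastforce
next
  fix u v assume u: "u \<in> pancake_vertices n" and "pancake_adj n u v"
  then obtain i where i: "2 \<le> i" "i \<le> n" "v = prefix_rev i u" unfolding pancake_adj_def by blast
  have "length u = n" "distinct u"
    using u length_pancake_vertex unfolding pancake_vertices_def by auto
  moreover have "u \<noteq> []" using assms \<open>length u = n\<close> by auto
  ultimately show "hd u \<noteq> hd v" using i by (simp add: hd_prefix_rev hd_conv_nth nth_eq_iff_index_eq)
qed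

lemma pancake_chi_colouring:
  assumes "n \<ge> 1"
  obtains c where "proper_colouring (pancake_vertices n) (pancake_adj n) (pancake_chi n) c"
  using chromatic_number_attained[OF proper_colouring_hd[OF assms]] assms
  unfolding pancake_chi_def by auto

definition low_part :: "nat \<Rightarrow> nat list \<Rightarrow> nat list" where
  "low_part a p = filter (\<lambda>x. x \<le> a) p"

definition high_part :: "nat \<Rightarrow> nat list \<Rightarrow> nat list" where
  "high_part a p = map (\<lambda>x. x - a) (filter (\<lambda>x. a < x) p)"

lemma low_part_vertex: "p \<in> pancake_vertices (a + b) \<Longrightarrow> low_part a p \<in> pancake_vertices a"
  unfolding low_part_def pancake_vertices_def by auto

lemma high_part_vertex: "p \<in> pancake_vertices (a + b) \<Longrightarrow> high_part a p \<in> pancake_vertices b"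
proof -
  assume "p \<in> pancake_vertices (a + b)"
  then have p: "distinct p" "set p = {1..a + b}" unfolding pancake_vertices_def by auto
  have "inj_on (\<lambda>x. x - a) (set (filter (\<lambda>x. a < x) p))" by (auto simp: inj_on_def)
  then have "distinct (high_part a p)" using p by (simp add: high_part_def distinct_map)
  moreover have "set (high_part a p) = (\<lambda>x. x - a) ` {a<..a + b}"
    using p by (auto simp: high_part_def)
  moreover have "(\<lambda>x. x - a) ` {a<..a + b} = {1..b}"
    by (auto simp: image_iff intro!: bexI[where x = "_ + a"])
  ultimately show ?thesis unfolding pancake_vertices_def by simp
qed

lemma low_part_adj:
  assumes "u \<in> pancake_vertices (a + b)" "pancake_adj (a + b) u v" "hd u \<le> a" "hd v \<le> a"
  shows "pancake_adj a (low_part a u) (low_part a v)"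
proof -
  obtain j where "2 \<le> j" "j \<le> length (low_part a u)" "low_part a v = prefix_rev j (low_part a u)"
    using pancake_adj_filter[OF assms(1,2), of "\<lambda>x. x \<le> a"] assms(3,4)
    unfolding low_part_def by blast
  then show ?thesis
    using length_pancake_vertex[OF low_part_vertex[OF assms(1)]] unfolding pancake_adj_def by auto
qed

lemma high_part_adj:
  assumes "u \<in> pancake_vertices (a + b)" "pancake_adj (a + b) u v" "a < hd u" "a < hd v"
  shows "pancake_adj b (high_part a u) (high_part a v)"
proof -
  obtain j where "2 \<le> j" "j \<le> length (high_part a u)" "high_part a v = prefix_rev j (high_part a u)"
    using pancake_adj_filter[OF assms(1,2), of "\<lambda>x. a < x"] assms(3,4)
    unfolding high_part_def by (metis length_map prefix_rev_map)
  then show ?thesis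
    using length_pancake_vertex[OF high_part_vertex[OF assms(1)]] unfolding pancake_adj_def by auto
qed

lemma pancake_chi_add: "pancake_chi (a + b) \<le> pancake_chi a + pancake_chi b"
proof (cases "a = 0 \<or> b = 0")
  case True
  then show ?thesis by (auto simp: pancake_chi_def)
next
  case False
  then obtain ca cb where
    ca: "proper_colouring (pancake_vertices a) (pancake_adj a) (pancake_chi a) ca" and
    cb: "proper_colouring (pancake_vertices b) (pancake_adj b) (pancake_chi b) cb"
    using pancake_chi_colouring[of a] pancake_chi_colouring[of b] by (metis less_one not_le)
  define f where
    "f p = (if hd p \<le> a then ca (low_part a p) else pancake_chi a + cb (high_part a p))" for p
  have low: "ca (low_part a p) < pancake_chi a" and high: "cb (high_part a p) < pancake_chi b"
    if "p \<in> pancake_vertices (a + b)" for p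
    using ca cb low_part_vertex[OF that] high_part_vertex[OF that]
    unfolding proper_colouring_def by auto
  have "proper_colouring (pancake_vertices (a + b)) (pancake_adj (a + b))
      (pancake_chi a + pancake_chi b) f"
    unfolding proper_colouring_def
  proof (intro conjI ballI impI)
    fix v assume "v \<in> pancake_vertices (a + b)"
    then show "f v < pancake_chi a + pancake_chi b" using low[of v] high[of v] by (simp add: f_def)
  next
    fix u v assume u: "u \<in> pancake_vertices (a + b)" and v: "v \<in> pancake_vertices (a + b)"
      and adj: "pancake_adj (a + b) u v"
    show "f u \<noteq> f v"
    proof (cases "hd u \<le> a"; cases "hd v \<le> a")
      assume "hd u \<le> a" "hd v \<le> a"
      then show ?thesis
        using ca low_part_adj[OF u adj] low_part_vertex[OF u] low_part_vertex[OF v]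
        unfolding proper_colouring_def f_def by auto
    next
      assume "\<not> hd u \<le> a" "\<not> hd v \<le> a"
      then show ?thesis
        using cb high_part_adj[OF u adj] high_part_vertex[OF u] high_part_vertex[OF v]
        unfolding proper_colouring_def f_def by auto
    qed (use low[OF u] low[OF v] in \<open>auto simp: f_def\<close>)
  qed
  with False show ?thesis by (simp add: pancake_chi_def chromatic_number_le)
qed

lemma pancake_chi_mult_add: "pancake_chi (k * a + r) \<le> k * pancake_chi a + pancake_chi r"
proof (induction k)
  case (Suc k)
  have "pancake_chi (Suc k * a + r) \<le> pancake_chi a + pancake_chi (k * a + r)"
    using pancake_chi_add[of a "k * a + r"] by (simp add: add.assoc)
  with Suc.IH show ?case by simp
qed simp

section \<open>Symmetries of nine labels\<close>

datatype label = L1 | L2 | L3 | L4 | L5 | L6 | L7 | L8 | L9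

datatype colour = C0 | C1 | C2 | C3

datatype triple = T1 | T2 | T3

definition all_labels :: "label list" where
  "all_labels = [L1, L2, L3, L4, L5, L6, L7, L8, L9]"

lemma set_all_labels: "set all_labels = UNIV"
proof -
  have "l \<in> set all_labels" for l by (cases l) (simp_all add: all_labels_def)
  then show ?thesis by blast
qed

lemma UNIV_colour: "(UNIV :: colour set) = {C0, C1, C2, C3}"
proof -
  have "c \<in> {C0, C1, C2, C3}" for c by (cases c) simp_all
  then show ?thesis by blast
qed

instance label :: finite
  by standard (simp flip: set_all_labels)

instance colour :: finite
  by standard (simp add: UNIV_colour)

lemma card_label: "card (UNIV :: label set) = 9"
  by (simp flip: set_all_labels add: all_labels_def)

fun triple_of :: "label \<Rightarrow> triple" where
  "triple_of L1 = T1" | "triple_of L2 = T1" | "triple_of L3 = T1"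
| "triple_of L4 = T2" | "triple_of L5 = T2" | "triple_of L6 = T2"
| "triple_of L7 = T3" | "triple_of L8 = T3" | "triple_of L9 = T3"

fun perm_of :: "label list \<Rightarrow> label \<Rightarrow> label" where
  "perm_of [a1, a2, a3, a4, a5, a6, a7, a8, a9] l =
     (case l of L1 \<Rightarrow> a1 | L2 \<Rightarrow> a2 | L3 \<Rightarrow> a3 | L4 \<Rightarrow> a4 | L5 \<Rightarrow> a5
        | L6 \<Rightarrow> a6 | L7 \<Rightarrow> a7 | L8 \<Rightarrow> a8 | L9 \<Rightarrow> a9)"
| "perm_of _ l = l"

fun cperm_of :: "colour list \<Rightarrow> colour \<Rightarrow> colour" where
  "cperm_of [a0, a1, a2, a3] c = (case c of C0 \<Rightarrow> a0 | C1 \<Rightarrow> a1 | C2 \<Rightarrow> a2 | C3 \<Rightarrow> a3)"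
| "cperm_of _ c = c"

text \<open>The colours are the four ways of orienting the triples {1,2,3}, {4,5,6}, {7,8,9}
  with an even number of triples reversed; rot c cycles every triple in its orientation.
  A relabelling that normalises the family rot thereby permutes the colours.\<close>
fun rot :: "colour \<Rightarrow> label \<Rightarrow> label" where
  "rot C0 = perm_of [L2, L3, L1, L5, L6, L4, L8, L9, L7]"
| "rot C1 = perm_of [L2, L3, L1, L6, L4, L5, L9, L7, L8]"
| "rot C2 = perm_of [L3, L1, L2, L5, L6, L4, L9, L7, L8]"
| "rot C3 = perm_of [L3, L1, L2, L6, L4, L5, L8, L9, L7]"

lemma rot_inject: "(\<And>x. rot c x = rot c' x) \<Longrightarrow> c = c'"
  by (cases c; cases c') (auto dest: meta_spec[of _ L1] meta_spec[of _ L4])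

definition symmetry :: "(label \<Rightarrow> label) \<Rightarrow> bool" where
  "symmetry m \<longleftrightarrow> bij m \<and> (\<forall>c. \<exists>c'. \<forall>x. m (rot c x) = rot c' (m x))"

definition colour_action :: "(label \<Rightarrow> label) \<Rightarrow> colour \<Rightarrow> colour" where
  "colour_action m c = (THE c'. \<forall>x. m (rot c x) = rot c' (m x))"

lemma colour_action_eqI:
  assumes "surj m" "\<And>x. m (rot c x) = rot c' (m x)"
  shows "colour_action m c = c'"
  unfolding colour_action_def
proof (rule the_equality)
  fix c'' assume c'': "\<forall>x. m (rot c x) = rot c'' (m x)"
  have "rot c'' y = rot c' y" for y
    using surjD[OF assms(1), of y] c'' assms(2) by metis
  then show "c'' = c'" by (rule rot_inject)
qed (use assms(2) in blast)

lemma symmetry_bij: "symmetry m \<Longrightarrow> bij m"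
  unfolding symmetry_def by blast

lemma symmetry_rot: "symmetry m \<Longrightarrow> m (rot c x) = rot (colour_action m c) (m x)"
  unfolding symmetry_def using colour_action_eqI bij_is_surj by metis

lemma symmetry_id: "symmetry id"
  unfolding symmetry_def by auto

lemma colour_action_id: "colour_action id c = c"
  by (rule colour_action_eqI) auto

lemma symmetry_comp:
  assumes "symmetry a" "symmetry b"
  shows "symmetry (a \<circ> b)" and "colour_action (a \<circ> b) c = colour_action a (colour_action b c)"
proof -
  have bij: "bij (a \<circ> b)" using assms by (simp add: symmetry_bij bij_comp)
  have rot: "(a \<circ> b) (rot c x) = rot (colour_action a (colour_action b c)) ((a \<circ> b) x)" for c x
    using assms by (simp add: symmetry_rot)
  show "symmetry (a \<circ> b)" unfolding symmetry_def using bij rot by blast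
  show "colour_action (a \<circ> b) c = colour_action a (colour_action b c)"
    by (rule colour_action_eqI[OF bij_is_surj[OF bij] rot])
qed

lemma symmetry_inv:
  assumes "symmetry m"
  shows "symmetry (inv m)"
proof -
  have bij: "bij m" using assms by (rule symmetry_bij)
  have "inj (colour_action m)"
  proof (rule injI)
    fix c1 c2 assume "colour_action m c1 = colour_action m c2"
    then have "m (rot c1 x) = m (rot c2 x)" for x using symmetry_rot[OF assms] by metis
    then show "c1 = c2" using bij_is_inj[OF bij] by (metis injD rot_inject)
  qed
  then have surj: "surj (colour_action m)" by (simp add: finite_UNIV_inj_surj)
  have "\<exists>c'. \<forall>x. inv m (rot c x) = rot c' (inv m x)" for c
  proof -
    obtain c' where c': "colour_action m c' = c" using surj by (metis surjD)
    have "inv m (rot c x) = rot c' (inv m x)" for x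
      using symmetry_rot[OF assms, of c' "inv m x"] c' bij
      by (metis bij_inv_eq_iff bij_is_surj surj_f_inv_f)
    then show ?thesis by blast
  qed
  with bij show ?thesis unfolding symmetry_def by (simp add: bij_imp_bij_inv)
qed

fun compatible :: "(label \<Rightarrow> label) \<times> (colour \<Rightarrow> colour) \<Rightarrow> bool" where
  "compatible (g, k) \<longleftrightarrow> inj g \<and> (\<forall>c x. g (rot c x) = rot (k c) (g x))"

lemma compatible_symmetry:
  assumes "compatible (g, k)"
  shows "symmetry g" and "colour_action g = k"
proof -
  have "bij g" using assms by (simp add: bij_def finite_UNIV_inj_surj)
  then show "symmetry g" using assms unfolding symmetry_def by auto
  show "colour_action g = k"
  proof
    fix c show "colour_action g c = k c"
      using assms bij_is_surj[OF \<open>bij g\<close>] by (intro colour_action_eqI) auto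
  qed
qed

lemma compatible_by_enumeration:
  "compatible (g, k) \<longleftrightarrow>
     list_all (\<lambda>x. list_all (\<lambda>y. g x = g y \<longrightarrow> x = y) all_labels) all_labels \<and>
     list_all (\<lambda>c. list_all (\<lambda>x. g (rot c x) = rot (k c) (g x)) all_labels) [C0, C1, C2, C3]"
proof -
  have "(\<forall>c. P c) \<longleftrightarrow> P C0 \<and> P C1 \<and> P C2 \<and> P C3" for P
    by (metis colour.exhaust)
  then show ?thesis by (simp add: inj_def list.pred_set set_all_labels)
qed

fun send_to_L1 :: "label \<Rightarrow> (label \<Rightarrow> label) \<times> (colour \<Rightarrow> colour)" where
  "send_to_L1 L1 = (id, id)"
| "send_to_L1 L2 = (perm_of [L3, L1, L2, L4, L5, L6, L7, L8, L9], id)"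
| "send_to_L1 L3 = (perm_of [L2, L3, L1, L4, L5, L6, L7, L8, L9], id)"
| "send_to_L1 L4 = (perm_of [L4, L5, L6, L1, L2, L3, L7, L8, L9], cperm_of [C0, C2, C1, C3])"
| "send_to_L1 L5 = (perm_of [L4, L5, L6, L3, L1, L2, L7, L8, L9], cperm_of [C0, C2, C1, C3])"
| "send_to_L1 L6 = (perm_of [L4, L5, L6, L2, L3, L1, L7, L8, L9], cperm_of [C0, C2, C1, C3])"
| "send_to_L1 L7 = (perm_of [L7, L8, L9, L4, L5, L6, L1, L2, L3], cperm_of [C0, C3, C2, C1])"
| "send_to_L1 L8 = (perm_of [L7, L8, L9, L4, L5, L6, L3, L1, L2], cperm_of [C0, C3, C2, C1])"
| "send_to_L1 L9 = (perm_of [L7, L8, L9, L4, L5, L6, L2, L3, L1], cperm_of [C0, C3, C2, C1])"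

fun send_to_L4 :: "label \<Rightarrow> (label \<Rightarrow> label) \<times> (colour \<Rightarrow> colour)" where
  "send_to_L4 L5 = (perm_of [L1, L2, L3, L6, L4, L5, L7, L8, L9], id)"
| "send_to_L4 L6 = (perm_of [L1, L2, L3, L5, L6, L4, L7, L8, L9], id)"
| "send_to_L4 L7 = (perm_of [L1, L2, L3, L7, L8, L9, L4, L5, L6], cperm_of [C0, C1, C3, C2])"
| "send_to_L4 L8 = (perm_of [L1, L2, L3, L7, L8, L9, L6, L4, L5], cperm_of [C0, C1, C3, C2])"
| "send_to_L4 L9 = (perm_of [L1, L2, L3, L7, L8, L9, L5, L6, L4], cperm_of [C0, C1, C3, C2])"
| "send_to_L4 _ = (id, id)"

fun send_to_L7 :: "label \<Rightarrow> (label \<Rightarrow> label) \<times> (colour \<Rightarrow> colour)" where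
  "send_to_L7 L8 = (perm_of [L1, L2, L3, L4, L5, L6, L9, L7, L8], id)"
| "send_to_L7 L9 = (perm_of [L1, L2, L3, L4, L5, L6, L8, L9, L7], id)"
| "send_to_L7 _ = (id, id)"

definition reverse_triples_13 :: "(label \<Rightarrow> label) \<times> (colour \<Rightarrow> colour)" where
  "reverse_triples_13 = (perm_of [L1, L3, L2, L4, L5, L6, L7, L9, L8], cperm_of [C2, C3, C0, C1])"

definition reverse_triples_23 :: "(label \<Rightarrow> label) \<times> (colour \<Rightarrow> colour)" where
  "reverse_triples_23 = (perm_of [L1, L2, L3, L4, L6, L5, L7, L9, L8], cperm_of [C1, C0, C3, C2])"

lemma compatible_send_to_L1: "compatible (send_to_L1 a)"
  by (cases a) (simp_all del: compatible.simps add: compatible_by_enumeration all_labels_def)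

lemma compatible_send_to_L4: "compatible (send_to_L4 a)"
  by (cases a) (simp_all del: compatible.simps add: compatible_by_enumeration all_labels_def)

lemma compatible_send_to_L7: "compatible (send_to_L7 a)"
  by (cases a) (simp_all del: compatible.simps add: compatible_by_enumeration all_labels_def)

lemma compatible_reverse_triples_13: "compatible reverse_triples_13"
  by (simp add: reverse_triples_13_def compatible_by_enumeration all_labels_def del: compatible.simps)

lemma compatible_reverse_triples_23: "compatible reverse_triples_23"
  by (simp add: reverse_triples_23_def compatible_by_enumeration all_labels_def del: compatible.simps)

fun precedes :: "'a list \<Rightarrow> 'a \<Rightarrow> 'a \<Rightarrow> bool" where
  "precedes [] a b = False"
| "precedes (x # xs) a b = (if x = a then True else if x = b then False else precedes xs a b)"

definition leads :: "('a \<Rightarrow> bool) \<Rightarrow> 'a \<Rightarrow> 'a list \<Rightarrow> bool" where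
  "leads P a xs \<longleftrightarrow> (\<forall>z. P z \<longrightarrow> z \<noteq> a \<longrightarrow> precedes xs a z)"

definition first_in :: "('a \<Rightarrow> bool) \<Rightarrow> 'a list \<Rightarrow> 'a" where
  "first_in P xs = the (find P xs)"

lemma precedes_map: "inj h \<Longrightarrow> precedes (map h xs) (h a) (h b) = precedes xs a b"
  by (induction xs) (auto simp: inj_eq)

lemma precedes_map_fixed:
  "inj h \<Longrightarrow> h a = a \<Longrightarrow> h b = b \<Longrightarrow> precedes xs a b \<Longrightarrow> precedes (map h xs) a b"
  using precedes_map[of h xs a b] by simp

lemma precedes_antisym: "precedes xs a b \<Longrightarrow> precedes xs b a \<Longrightarrow> a = b"
  by (induction xs) (auto split: if_splits)

lemma precedes_total: "a \<in> set xs \<Longrightarrow> precedes xs a b \<or> precedes xs b a"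
  by (induction xs) auto

lemma precedes_trans: "precedes xs a b \<Longrightarrow> precedes xs b c \<Longrightarrow> precedes xs a c"
  by (induction xs) (auto split: if_splits)

lemma precedes_in_take:
  assumes "distinct xs" "precedes xs a (xs ! k)" "a \<noteq> xs ! k" "k < length xs"
  shows "a \<in> set (take k xs)"
  using assms
proof (induction xs arbitrary: k)
  case (Cons x xs)
  then show ?case by (cases k) (auto split: if_splits)
qed simp

lemma leads_first_in:
  "\<exists>y\<in>set xs. P y \<Longrightarrow> P (first_in P xs) \<and> leads P (first_in P xs) xs"
  unfolding leads_def first_in_def by (induction xs) auto

lemma leads_map:
  assumes "bij h" "\<And>z. P (h z) = P z" "leads P a xs"
  shows "leads P (h a) (map h xs)"
  unfolding leads_def
proof (intro allI impI)
  fix z assume z: "P z" "z \<noteq> h a"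
  obtain z' where z': "z = h z'" using bij_is_surj[OF assms(1)] by blast
  have "precedes xs a z'" using assms(2,3) z z' unfolding leads_def by auto
  then show "precedes (map h xs) (h a) z" using z' precedes_map[OF bij_is_inj[OF assms(1)]] by simp
qed

lemma preserves_class:
  assumes "inj m" "\<And>z. \<not> P z \<Longrightarrow> m z = z"
  shows "P (m z) = P z"
  using assms by (metis injD)

lemma leader_fixed:
  assumes "bij m" "\<And>z. \<not> P z \<Longrightarrow> m z = z" "P a" "leads P a xs" "leads P a (map m xs)"
  shows "m a = a"
proof (rule ccontr)
  assume ne: "m a \<noteq> a"
  have preserved: "P (m z) = P z" for z by (rule preserves_class[OF bij_is_inj[OF assms(1)] assms(2)])
  obtain z where z: "m z = a" using bij_is_surj[OF assms(1)] by (metis surjD)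
  have "z \<noteq> a" using z ne by auto
  moreover have "P z" using preserved assms(3) z by metis
  ultimately have "precedes xs a z" using assms(4) unfolding leads_def by blast
  then have "precedes (map m xs) (m a) a" using precedes_map[OF bij_is_inj[OF assms(1)]] z by metis
  moreover have "precedes (map m xs) a (m a)"
    using preserved assms(3,5) ne unfolding leads_def by metis
  ultimately show False using precedes_antisym ne by metis
qed

definition arrangement :: "label list \<Rightarrow> bool" where
  "arrangement x \<longleftrightarrow> distinct x \<and> set x = UNIV"

lemma arrangement_map: "bij h \<Longrightarrow> arrangement x \<Longrightarrow> arrangement (map h x)"
  unfolding arrangement_def by (simp add: distinct_map bij_is_inj bij_is_surj inj_on_subset)

lemma arrangement_length: "arrangement x \<Longrightarrow> length x = 9"
  unfolding arrangement_def using distinct_card card_label by metis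

lemma arrangement_prefix_rev: "arrangement x \<Longrightarrow> arrangement (prefix_rev i x)"
  unfolding arrangement_def by simp

fun required_before :: "label \<Rightarrow> label list" where
  "required_before L3 = [L2]"
| "required_before L5 = [L4]"
| "required_before L6 = [L5]"
| "required_before L7 = [L4]"
| "required_before L8 = [L7]"
| "required_before L9 = [L7]"
| "required_before _ = []"

text \<open>Exactly one canonical arrangement lies in each orbit of the symmetries
  (normalise_canonical, canonical_unique).\<close>
definition canonical :: "label list \<Rightarrow> bool" where
  "canonical x \<longleftrightarrow> arrangement x \<and> hd x = L1 \<and>
     (\<forall>a. \<forall>b\<in>set (required_before a). precedes x b a)"

lemma canonical_precedes:
  assumes "canonical x"
  shows "precedes x L2 L3" "precedes x L4 L5" "precedes x L5 L6" "precedes x L4 L7"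
    "precedes x L7 L8" "precedes x L7 L9"
proof -
  have "\<forall>b\<in>set (required_before a). precedes x b a" for a
    using assms unfolding canonical_def by blast
  from this[of L3] this[of L5] this[of L6] this[of L7] this[of L8] this[of L9]
  show "precedes x L2 L3" "precedes x L4 L5" "precedes x L5 L6" "precedes x L4 L7"
    "precedes x L7 L8" "precedes x L7 L9" by simp_all
qed

lemma canonical_leads:
  assumes "canonical x"
  shows "leads (\<lambda>l. triple_of l \<noteq> T1) L4 x" "leads (\<lambda>l. triple_of l = T3) L7 x"
proof -
  note p = canonical_precedes[OF assms]
  have "precedes x L4 L6" "precedes x L4 L8" "precedes x L4 L9" using p precedes_trans by metis+
  with p have "precedes x L4 z" if "triple_of z \<noteq> T1" "z \<noteq> L4" for z
    using that by (cases z) simp_all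
  moreover have "precedes x L7 z" if "triple_of z = T3" "z \<noteq> L7" for z
    using that p by (cases z) simp_all
  ultimately show "leads (\<lambda>l. triple_of l \<noteq> T1) L4 x" "leads (\<lambda>l. triple_of l = T3) L7 x"
    unfolding leads_def by blast+
qed

definition normalising_steps :: "(label list \<Rightarrow> (label \<Rightarrow> label) \<times> (colour \<Rightarrow> colour)) list" where
  "normalising_steps =
     [\<lambda>x. send_to_L1 (hd x),
      \<lambda>x. if precedes x L3 L2 then reverse_triples_13 else (id, id),
      \<lambda>x. send_to_L4 (first_in (\<lambda>l. triple_of l \<noteq> T1) x),
      \<lambda>x. send_to_L7 (first_in (\<lambda>l. triple_of l = T3) x),
      \<lambda>x. if precedes x L6 L5 then reverse_triples_23 else (id, id)]"

fun apply_step ::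
  "(label list \<Rightarrow> (label \<Rightarrow> label) \<times> (colour \<Rightarrow> colour)) \<Rightarrow> label list \<times> colour
     \<Rightarrow> label list \<times> colour" where
  "apply_step s (x, c) = (map (fst (s x)) x, snd (s x) c)"

definition normalise :: "label list \<times> colour \<Rightarrow> label list \<times> colour" where
  "normalise = fold apply_step normalising_steps"

lemma compatible_bij: "compatible gk \<Longrightarrow> bij (fst gk)"
  by (metis compatible_symmetry(1) prod.collapse symmetry_bij)

lemma compatible_if: "compatible gk \<Longrightarrow> compatible (if P then gk else (id, id))"
  by simp

lemma normalising_steps_compatible: "s \<in> set normalising_steps \<Longrightarrow> compatible (s x)"
  using compatible_send_to_L1 compatible_send_to_L4 compatible_send_to_L7
    compatible_if[OF compatible_reverse_triples_13] compatible_if[OF compatible_reverse_triples_23]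
  unfolding normalising_steps_def by auto

lemma fold_apply_step_symmetry:
  assumes "\<forall>s\<in>set ss. \<forall>x. compatible (s x)" "symmetry h"
  shows "\<exists>h'. symmetry h' \<and>
    fold apply_step ss (map h x, colour_action h c) = (map h' x, colour_action h' c)"
  using assms
proof (induction ss arbitrary: h)
  case (Cons s ss)
  obtain g k where gk: "s (map h x) = (g, k)" by fastforce
  then have "compatible (g, k)" using Cons.prems(1) by (metis list.set_intros(1))
  then have g: "symmetry g" "colour_action g = k" by (rule compatible_symmetry)+
  have step: "apply_step s (map h x, colour_action h c) = (map (g \<circ> h) x, colour_action (g \<circ> h) c)"
    using gk g Cons.prems(2) by (simp add: symmetry_comp)
  have "symmetry (g \<circ> h)" using g(1) Cons.prems(2) by (rule symmetry_comp)
  then obtain h' where h': "symmetry h'"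
    "fold apply_step ss (map (g \<circ> h) x, colour_action (g \<circ> h) c) = (map h' x, colour_action h' c)"
    using Cons.IH Cons.prems(1) by (meson list.set_intros(2))
  show ?case
  proof (intro exI conjI)
    show "symmetry h'" by (fact h'(1))
    show "fold apply_step (s # ss) (map h x, colour_action h c) = (map h' x, colour_action h' c)"
      by (simp only: fold_Cons comp_apply step h'(2))
  qed
qed auto

lemma normalise_symmetry: "\<exists>h. symmetry h \<and> normalise (x, c) = (map h x, colour_action h c)"
  using fold_apply_step_symmetry[OF _ symmetry_id, of normalising_steps x c]
    normalising_steps_compatible
  by (simp add: normalise_def colour_action_id)

lemma send_to_L1_self: "fst (send_to_L1 a) a = L1"
  by (cases a) simp_all

lemma send_to_L4_apply:
  shows "triple_of l = T1 \<Longrightarrow> fst (send_to_L4 u) l = l"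
    and "triple_of u \<noteq> T1 \<Longrightarrow> fst (send_to_L4 u) u = L4"
  by (cases u; cases l; simp)+

lemma send_to_L7_apply:
  shows "triple_of l \<noteq> T3 \<Longrightarrow> fst (send_to_L7 w) l = l"
    and "triple_of w = T3 \<Longrightarrow> fst (send_to_L7 w) w = L7"
  by (cases w; cases l; simp)+

lemma reverse_triples_13_apply:
  "fst reverse_triples_13 L1 = L1" "fst reverse_triples_13 L2 = L3" "fst reverse_triples_13 L3 = L2"
  by (simp_all add: reverse_triples_13_def)

lemma reverse_triples_23_apply:
  shows "l \<in> {L1, L2, L3, L4, L7} \<Longrightarrow> fst reverse_triples_23 l = l"
    and "triple_of (fst reverse_triples_23 l) = triple_of l"
    and "fst reverse_triples_23 L5 = L6" "fst reverse_triples_23 L6 = L5"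
  by (cases l; auto simp: reverse_triples_23_def)+

lemma precedes_after_swap:
  assumes "inj (fst gk)" "fst gk a = b" "fst gk b = a" "a \<in> set x"
  shows "precedes (map (fst (if precedes x b a then gk else (id, id))) x) a b"
proof (cases "precedes x b a")
  case True
  then show ?thesis using precedes_map[OF assms(1), of x b a] assms(2,3) by simp
next
  case False
  then show ?thesis using precedes_total[OF assms(4), of b] by simp
qed

lemma leads_map_fixing:
  assumes "bij h" "\<And>z. \<not> P z \<Longrightarrow> h z = z" "leads P a xs"
  shows "leads P (h a) (map h xs)"
  using leads_map[OF assms(1) _ assms(3)] preserves_class[OF bij_is_inj[OF assms(1)] assms(2)]
  by blast

lemma arrangement_nonempty: "arrangement x \<Longrightarrow> x \<noteq> []"
  using arrangement_length by fastforce

lemma arrangement_member: "arrangement x \<Longrightarrow> l \<in> set x"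
  unfolding arrangement_def by simp

lemma send_to_L1_step:
  assumes "arrangement x"
  defines "y \<equiv> map (fst (send_to_L1 (hd x))) x"
  shows "arrangement y" "hd y = L1"
proof -
  show "arrangement y" unfolding y_def
    by (rule arrangement_map[OF _ assms(1)])
      (simp add: compatible_bij compatible_send_to_L1 del: compatible.simps)
  show "hd y = L1"
    using arrangement_nonempty[OF assms(1)] by (simp add: y_def hd_map send_to_L1_self)
qed

lemma reverse_triples_13_step:
  assumes "arrangement x" "hd x = L1"
  defines "y \<equiv> map (fst (if precedes x L3 L2 then reverse_triples_13 else (id, id))) x"
  shows "arrangement y" "hd y = L1" "precedes y L2 L3"
proof -
  have bij: "bij (fst reverse_triples_13)"
    by (simp add: compatible_bij compatible_reverse_triples_13 del: compatible.simps)
  then show "arrangement y" unfolding y_def by (simp add: arrangement_map assms(1))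
  from bij_is_inj[OF bij] show "precedes y L2 L3"
    unfolding y_def using arrangement_member[OF assms(1)]
    by (intro precedes_after_swap) (simp_all add: reverse_triples_13_apply)
  show "hd y = L1"
    using arrangement_nonempty[OF assms(1)] assms(2) by (simp add: y_def hd_map reverse_triples_13_apply)
qed

lemma send_to_L4_step:
  assumes "arrangement x" "hd x = L1" "precedes x L2 L3"
  defines "y \<equiv> map (fst (send_to_L4 (first_in (\<lambda>l. triple_of l \<noteq> T1) x))) x"
  shows "arrangement y" "hd y = L1" "precedes y L2 L3" "leads (\<lambda>l. triple_of l \<noteq> T1) L4 y"
proof -
  let ?u = "first_in (\<lambda>l. triple_of l \<noteq> T1) x"
  let ?g = "fst (send_to_L4 ?u)"
  have bij: "bij ?g" by (simp add: compatible_bij compatible_send_to_L4 del: compatible.simps)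
  have fixed: "?g l = l" if "triple_of l = T1" for l using that by (rule send_to_L4_apply(1))
  show "arrangement y" unfolding y_def by (rule arrangement_map[OF bij assms(1)])
  show "hd y = L1" using arrangement_nonempty[OF assms(1)] assms(2) fixed[of L1]
    by (simp add: y_def hd_map)
  show "precedes y L2 L3" unfolding y_def
    using precedes_map_fixed[OF bij_is_inj[OF bij]] fixed[of L2] fixed[of L3] assms(3) by simp
  have u: "triple_of ?u \<noteq> T1 \<and> leads (\<lambda>l. triple_of l \<noteq> T1) ?u x"
    by (rule leads_first_in) (use arrangement_member[OF assms(1), of L4] in force)
  then have "leads (\<lambda>l. triple_of l \<noteq> T1) (?g ?u) y"
    unfolding y_def by (intro leads_map_fixing[OF bij]) (simp_all add: fixed)
  then show "leads (\<lambda>l. triple_of l \<noteq> T1) L4 y" using u send_to_L4_apply(2) by simp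
qed

lemma send_to_L7_step:
  assumes "arrangement x" "hd x = L1" "precedes x L2 L3" "leads (\<lambda>l. triple_of l \<noteq> T1) L4 x"
  defines "y \<equiv> map (fst (send_to_L7 (first_in (\<lambda>l. triple_of l = T3) x))) x"
  shows "arrangement y" "hd y = L1" "precedes y L2 L3" "leads (\<lambda>l. triple_of l \<noteq> T1) L4 y"
    "leads (\<lambda>l. triple_of l = T3) L7 y"
proof -
  let ?w = "first_in (\<lambda>l. triple_of l = T3) x"
  let ?g = "fst (send_to_L7 ?w)"
  have bij: "bij ?g" by (simp add: compatible_bij compatible_send_to_L7 del: compatible.simps)
  have fixed: "?g l = l" if "triple_of l \<noteq> T3" for l using that by (rule send_to_L7_apply(1))
  show "arrangement y" unfolding y_def by (rule arrangement_map[OF bij assms(1)])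
  show "hd y = L1" using arrangement_nonempty[OF assms(1)] assms(2) fixed[of L1]
    by (simp add: y_def hd_map)
  show "precedes y L2 L3" unfolding y_def
    using precedes_map_fixed[OF bij_is_inj[OF bij]] fixed[of L2] fixed[of L3] assms(3) by simp
  show "leads (\<lambda>l. triple_of l \<noteq> T1) L4 y"
    using leads_map_fixing[OF bij _ assms(4)] fixed fixed[of L4] by (simp add: y_def)
  have w: "triple_of ?w = T3 \<and> leads (\<lambda>l. triple_of l = T3) ?w x"
    by (rule leads_first_in) (use arrangement_member[OF assms(1), of L7] in force)
  then have "leads (\<lambda>l. triple_of l = T3) (?g ?w) y"
    unfolding y_def by (intro leads_map_fixing[OF bij]) (simp_all add: fixed)
  then show "leads (\<lambda>l. triple_of l = T3) L7 y" using w send_to_L7_apply(2) by simp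
qed

lemma reverse_triples_23_step:
  assumes "arrangement x" "hd x = L1" "precedes x L2 L3" "leads (\<lambda>l. triple_of l \<noteq> T1) L4 x"
    "leads (\<lambda>l. triple_of l = T3) L7 x"
  defines "y \<equiv> map (fst (if precedes x L6 L5 then reverse_triples_23 else (id, id))) x"
  shows "canonical y"
proof -
  let ?g = "fst (if precedes x L6 L5 then reverse_triples_23 else (id, id))"
  have bij: "bij (fst reverse_triples_23)"
    by (simp add: compatible_bij compatible_reverse_triples_23 del: compatible.simps)
  then have bij': "bij ?g" by simp
  have fixed: "?g l = l" if "l \<in> {L1, L2, L3, L4, L7}" for l
    using that by (simp add: reverse_triples_23_apply)
  have triple: "triple_of (?g l) = triple_of l" for l by (simp add: reverse_triples_23_apply)
  have "arrangement y" unfolding y_def by (rule arrangement_map[OF bij' assms(1)])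
  moreover have "hd y = L1" using arrangement_nonempty[OF assms(1)] assms(2) fixed[of L1]
    by (simp add: y_def hd_map)
  moreover have "precedes y L2 L3" "precedes y L5 L6"
    "leads (\<lambda>l. triple_of l \<noteq> T1) L4 y" "leads (\<lambda>l. triple_of l = T3) L7 y"
  proof -
    show "precedes y L2 L3" unfolding y_def
      using precedes_map_fixed[OF bij_is_inj[OF bij']] fixed assms(3) by simp
    show "precedes y L5 L6"
      unfolding y_def using arrangement_member[OF assms(1)] bij_is_inj[OF bij]
      by (intro precedes_after_swap) (simp_all add: reverse_triples_23_apply)
    show "leads (\<lambda>l. triple_of l \<noteq> T1) L4 y" "leads (\<lambda>l. triple_of l = T3) L7 y"
      using leads_map[OF bij' _ assms(4)] leads_map[OF bij' _ assms(5)] fixed triple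
      by (simp_all add: y_def)
  qed
  then have "\<forall>b\<in>set (required_before a). precedes y b a" for a
    unfolding leads_def by (cases a) simp_all
  ultimately show "canonical y" unfolding canonical_def by blast
qed

lemma normalise_canonical:
  assumes "arrangement x"
  shows "canonical (fst (normalise (x, c)))"
proof -
  define x1 where "x1 = map (fst (send_to_L1 (hd x))) x"
  define x2 where "x2 = map (fst (if precedes x1 L3 L2 then reverse_triples_13 else (id, id))) x1"
  define x3 where "x3 = map (fst (send_to_L4 (first_in (\<lambda>l. triple_of l \<noteq> T1) x2))) x2"
  define x4 where "x4 = map (fst (send_to_L7 (first_in (\<lambda>l. triple_of l = T3) x3))) x3"
  note step1 = send_to_L1_step[OF assms, folded x1_def]
  note step2 = reverse_triples_13_step[OF step1, folded x2_def]
  note step3 = send_to_L4_step[OF step2, folded x3_def]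
  note step4 = send_to_L7_step[OF step3, folded x4_def]
  have "canonical (map (fst (if precedes x4 L6 L5 then reverse_triples_23 else (id, id))) x4)"
    by (rule reverse_triples_23_step[OF step4])
  then show ?thesis
    by (simp add: normalise_def normalising_steps_def x1_def x2_def x3_def x4_def)
qed

lemma canonical_unique:
  assumes "symmetry m" "canonical x" "canonical (map m x)"
  shows "m = id"
proof -
  \<comment> \<open>m carries the 3-cycles of rot C0 to those of rot c, so on each triple it is
    determined by the image of one label together with the orientation c.\<close>
  define c where "c = colour_action m C0"
  have m_rot: "m (rot C0 l) = rot c (m l)" for l unfolding c_def by (rule symmetry_rot[OF assms(1)])
  have bij: "bij m" and inj: "inj m" using assms(1) symmetry_bij bij_is_inj by auto
  have ordered: "\<not> (m a = b \<and> m b = a)"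
    if "a \<noteq> b" "precedes x a b" "precedes (map m x) a b" for a b
    using that precedes_map[OF inj, of x a b] precedes_antisym by metis
  have m1: "m L1 = L1"
    using assms(2,3) arrangement_nonempty unfolding canonical_def by (metis hd_map)
  have "m L2 = rot c L1" "m L3 = rot c (rot c L1)" using m_rot[of L1] m_rot[of L2] m1 by simp_all
  with ordered[of L2 L3] have c: "c = C0 \<or> c = C1" and m23: "m L2 = L2" "m L3 = L3"
    by (cases c; simp add: canonical_precedes assms)+
  have m4: "m L4 = L4"
  proof (rule leader_fixed[OF bij, where P = "\<lambda>l. triple_of l \<noteq> T1" and xs = x])
    show "m z = z" if "\<not> triple_of z \<noteq> T1" for z using that m1 m23 by (cases z) simp_all
  qed (simp_all add: canonical_leads assms)
  have "m L5 = rot c L4" "m L6 = rot c (rot c L4)" using m_rot[of L4] m_rot[of L5] m4 by simp_all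
  with c ordered[of L5 L6] have c0: "c = C0" and m56: "m L5 = L5" "m L6 = L6"
    by (auto simp: canonical_precedes assms)
  have m7: "m L7 = L7"
  proof (rule leader_fixed[OF bij, where P = "\<lambda>l. triple_of l = T3" and xs = x])
    show "m z = z" if "triple_of z \<noteq> T3" for z using that m1 m23 m4 m56 by (cases z) simp_all
  qed (simp_all add: canonical_leads assms)
  have m89: "m L8 = L8" "m L9 = L9" using m_rot[of L7] m_rot[of L8] m7 c0 by simp_all
  show "m = id"
  proof
    fix l show "m l = id l" using m1 m23 m4 m56 m7 m89 by (cases l) simp_all
  qed
qed

section \<open>A 4-colouring of P_9\<close>

datatype trie = Leaf colour | Node "(label \<times> trie) list"

fun lookup :: "trie \<Rightarrow> label list \<Rightarrow> colour" where
  "lookup (Leaf c) xs = c"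
| "lookup (Node ((b, t) # ts)) (a # xs) = (if a = b then lookup t xs else lookup (Node ts) (a # xs))"
| "lookup (Node _) _ = C0"

text \<open>As a congruence rule this keeps evaluation by simp from descending into the trie.\<close>
lemma lookup_cong: "xs = ys \<Longrightarrow> lookup t xs = lookup t ys"
  by simp

text \<open>The colours of the 560 canonical arrangements, found by computer search. Only the
  values on canonical arrangements matter.\<close>
definition table :: "label list \<Rightarrow> colour" where
  "table x = lookup
    (Node
        [(L1, Node
           [(L2, Node
              [(L3, Node
                 [(L4, Node
                    [(L5, Node
                       [(L6, Node [(L7, Node [(L8, Leaf C3), (L9, Leaf C0)])]),
                        (L7, Node
                          [(L6, Leaf C0),
                           (L8, Node [(L6, Leaf C0), (L9, Leaf C2)]),
                           (L9, Leaf C3)])]),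
                     (L7, Node
                       [(L5, Node
                          [(L6, Node [(L8, Leaf C3), (L9, Leaf C2)]),
                           (L8, Node [(L6, Leaf C2), (L9, Leaf C3)]),
                           (L9, Leaf C2)]),
                        (L8, Node [(L5, Node [(L6, Leaf C1), (L9, Leaf C0)]), (L9, Leaf C0)]),
                        (L9, Node [(L5, Node [(L6, Leaf C1), (L8, Leaf C3)]), (L8, Leaf C1)])])])]),
               (L4, Node
                 [(L3, Node
                    [(L5, Node
                       [(L6, Node [(L7, Node [(L8, Leaf C3), (L9, Leaf C0)])]),
                        (L7, Node
                          [(L6, Leaf C2),
                           (L8, Node [(L6, Leaf C0), (L9, Leaf C1)]),
                           (L9, Node [(L6, Leaf C0), (L8, Leaf C1)])])]),
                     (L7, Node
                       [(L5, Node
                          [(L6, Node [(L8, Leaf C2), (L9, Leaf C1)]),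
                           (L8, Leaf C1),
                           (L9, Node [(L6, Leaf C2), (L8, Leaf C1)])]),
                        (L8, Node [(L5, Node [(L6, Leaf C1), (L9, Leaf C3)]), (L9, Leaf C3)]),
                        (L9, Node [(L5, Node [(L6, Leaf C1), (L8, Leaf C0)]), (L8, Leaf C3)])])]),
                  (L5, Node
                    [(L3, Node
                       [(L6, Leaf C1),
                        (L7, Node
                          [(L6, Leaf C0),
                           (L8, Node [(L6, Leaf C3), (L9, Leaf C2)]),
                           (L9, Leaf C3)])]),
                     (L6, Node
                       [(L3, Node [(L7, Node [(L8, Leaf C3), (L9, Leaf C0)])]),
                        (L7, Node
                          [(L3, Node [(L8, Leaf C1), (L9, Leaf C2)]),
                           (L8, Node [(L3, Leaf C1), (L9, Leaf C0)]),
                           (L9, Node [(L3, Leaf C2), (L8, Leaf C1)])])]),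
                     (L7, Node
                       [(L3, Node
                          [(L6, Leaf C0),
                           (L8, Node [(L6, Leaf C2), (L9, Leaf C0)]),
                           (L9, Node [(L6, Leaf C2), (L8, Leaf C3)])]),
                        (L6, Node
                          [(L3, Node [(L8, Leaf C1), (L9, Leaf C0)]),
                           (L8, Node [(L3, Leaf C3), (L9, Leaf C2)]),
                           (L9, Node [(L3, Leaf C0), (L8, Leaf C3)])]),
                        (L8, Node
                          [(L3, Leaf C1),
                           (L6, Leaf C3),
                           (L9, Node [(L3, Leaf C2), (L6, Leaf C1)])]),
                        (L9, Node
                          [(L3, Node [(L6, Leaf C2), (L8, Leaf C0)]),
                           (L6, Node [(L3, Leaf C3), (L8, Leaf C0)]),
                           (L8, Node [(L3, Leaf C2), (L6, Leaf C1)])])])]),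
                  (L7, Node
                    [(L3, Node
                       [(L5, Node
                          [(L6, Node [(L8, Leaf C3), (L9, Leaf C0)]),
                           (L8, Node [(L6, Leaf C3), (L9, Leaf C0)]),
                           (L9, Node [(L6, Leaf C2), (L8, Leaf C1)])]),
                        (L8, Node [(L5, Node [(L6, Leaf C0), (L9, Leaf C3)]), (L9, Leaf C0)]),
                        (L9, Node [(L5, Node [(L6, Leaf C0), (L8, Leaf C3)]), (L8, Leaf C3)])]),
                     (L5, Node
                       [(L3, Node
                          [(L6, Leaf C3),
                           (L8, Node [(L6, Leaf C1), (L9, Leaf C0)]),
                           (L9, Node [(L6, Leaf C1), (L8, Leaf C0)])]),
                        (L6, Node
                          [(L3, Node [(L8, Leaf C0), (L9, Leaf C1)]),
                           (L8, Node [(L3, Leaf C1), (L9, Leaf C0)]),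
                           (L9, Node [(L3, Leaf C2), (L8, Leaf C1)])]),
                        (L8, Node
                          [(L3, Node [(L6, Leaf C1), (L9, Leaf C2)]),
                           (L6, Leaf C2),
                           (L9, Leaf C0)]),
                        (L9, Node
                          [(L3, Node [(L6, Leaf C0), (L8, Leaf C1)]),
                           (L6, Leaf C2),
                           (L8, Node [(L3, Leaf C3), (L6, Leaf C0)])])]),
                     (L8, Node
                       [(L3, Node [(L5, Node [(L6, Leaf C0), (L9, Leaf C2)]), (L9, Leaf C0)]),
                        (L5, Node
                          [(L3, Node [(L6, Leaf C1), (L9, Leaf C3)]),
                           (L6, Node [(L3, Leaf C3), (L9, Leaf C1)]),
                           (L9, Node [(L3, Leaf C1), (L6, Leaf C3)])]),
                        (L9, Node [(L3, Leaf C1), (L5, Node [(L3, Leaf C1), (L6, Leaf C3)])])]),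
                     (L9, Node
                       [(L3, Node [(L5, Node [(L6, Leaf C1), (L8, Leaf C2)]), (L8, Leaf C1)]),
                        (L5, Node
                          [(L3, Node [(L6, Leaf C1), (L8, Leaf C3)]),
                           (L6, Node [(L3, Leaf C3), (L8, Leaf C0)]),
                           (L8, Leaf C0)]),
                        (L8, Leaf C0)])])])]),
            (L4, Node
              [(L2, Node
                 [(L3, Node
                    [(L5, Node
                       [(L6, Node [(L7, Node [(L8, Leaf C3), (L9, Leaf C0)])]),
                        (L7, Node
                          [(L6, Leaf C2),
                           (L8, Node [(L6, Leaf C3), (L9, Leaf C2)]),
                           (L9, Node [(L6, Leaf C0), (L8, Leaf C2)])])]),
                     (L7, Node
                       [(L5, Node
                          [(L6, Leaf C1),
                           (L8, Node [(L6, Leaf C3), (L9, Leaf C2)]),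
                           (L9, Node [(L6, Leaf C2), (L8, Leaf C1)])]),
                        (L8, Node [(L5, Node [(L6, Leaf C0), (L9, Leaf C3)]), (L9, Leaf C3)]),
                        (L9, Node [(L5, Leaf C0), (L8, Leaf C2)])])]),
                  (L5, Node
                    [(L3, Node
                       [(L6, Leaf C0),
                        (L7, Node
                          [(L6, Leaf C1),
                           (L8, Node [(L6, Leaf C0), (L9, Leaf C1)]),
                           (L9, Leaf C0)])]),
                     (L6, Node
                       [(L3, Node [(L7, Node [(L8, Leaf C1), (L9, Leaf C0)])]),
                        (L7, Node
                          [(L3, Node [(L8, Leaf C3), (L9, Leaf C0)]),
                           (L8, Node [(L3, Leaf C1), (L9, Leaf C3)]),
                           (L9, Leaf C0)])]),
                     (L7, Node
                       [(L3, Node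
                          [(L6, Leaf C0),
                           (L8, Node [(L6, Leaf C2), (L9, Leaf C1)]),
                           (L9, Node [(L6, Leaf C1), (L8, Leaf C2)])]),
                        (L6, Node
                          [(L3, Leaf C2),
                           (L8, Node [(L3, Leaf C1), (L9, Leaf C2)]),
                           (L9, Node [(L3, Leaf C2), (L8, Leaf C3)])]),
                        (L8, Node
                          [(L3, Leaf C2),
                           (L6, Node [(L3, Leaf C1), (L9, Leaf C0)]),
                           (L9, Node [(L3, Leaf C0), (L6, Leaf C2)])]),
                        (L9, Node [(L3, Leaf C2), (L6, Leaf C0), (L8, Leaf C3)])])]),
                  (L7, Node
                    [(L3, Node
                       [(L5, Node
                          [(L6, Node [(L8, Leaf C2), (L9, Leaf C3)]),
                           (L8, Node [(L6, Leaf C3), (L9, Leaf C2)]),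
                           (L9, Leaf C3)]),
                        (L8, Node [(L5, Node [(L6, Leaf C2), (L9, Leaf C3)]), (L9, Leaf C2)]),
                        (L9, Node [(L5, Node [(L6, Leaf C2), (L8, Leaf C3)]), (L8, Leaf C3)])]),
                     (L5, Node
                       [(L3, Node
                          [(L6, Leaf C3),
                           (L8, Node [(L6, Leaf C0), (L9, Leaf C2)]),
                           (L9, Node [(L6, Leaf C1), (L8, Leaf C3)])]),
                        (L6, Node
                          [(L3, Leaf C1),
                           (L8, Node [(L3, Leaf C1), (L9, Leaf C2)]),
                           (L9, Node [(L3, Leaf C1), (L8, Leaf C2)])]),
                        (L8, Node
                          [(L3, Leaf C3),
                           (L6, Node [(L3, Leaf C3), (L9, Leaf C0)]),
                           (L9, Node [(L3, Leaf C0), (L6, Leaf C2)])]),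
                        (L9, Node
                          [(L3, Node [(L6, Leaf C3), (L8, Leaf C2)]),
                           (L6, Node [(L3, Leaf C2), (L8, Leaf C1)]),
                           (L8, Node [(L3, Leaf C1), (L6, Leaf C3)])])]),
                     (L8, Node
                       [(L3, Node [(L5, Node [(L6, Leaf C3), (L9, Leaf C0)]), (L9, Leaf C0)]),
                        (L5, Node
                          [(L3, Node [(L6, Leaf C0), (L9, Leaf C1)]),
                           (L6, Node [(L3, Leaf C1), (L9, Leaf C3)]),
                           (L9, Node [(L3, Leaf C3), (L6, Leaf C0)])]),
                        (L9, Node [(L3, Leaf C2), (L5, Node [(L3, Leaf C2), (L6, Leaf C1)])])]),
                     (L9, Node
                       [(L3, Node [(L5, Node [(L6, Leaf C2), (L8, Leaf C0)]), (L8, Leaf C3)]),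
                        (L5, Node
                          [(L3, Node [(L6, Leaf C1), (L8, Leaf C0)]),
                           (L6, Node [(L3, Leaf C1), (L8, Leaf C2)]),
                           (L8, Node [(L3, Leaf C2), (L6, Leaf C1)])]),
                        (L8, Node [(L3, Leaf C3), (L5, Node [(L3, Leaf C3), (L6, Leaf C0)])])])])]),
               (L5, Node
                 [(L2, Node
                    [(L3, Node
                       [(L6, Node [(L7, Node [(L8, Leaf C0), (L9, Leaf C3)])]),
                        (L7, Node
                          [(L6, Leaf C1),
                           (L8, Node [(L6, Leaf C3), (L9, Leaf C2)]),
                           (L9, Leaf C2)])]),
                     (L6, Node
                       [(L3, Node [(L7, Node [(L8, Leaf C1), (L9, Leaf C2)])]),
                        (L7, Node
                          [(L3, Leaf C3),
                           (L8, Node [(L3, Leaf C3), (L9, Leaf C0)]),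
                           (L9, Node [(L3, Leaf C1), (L8, Leaf C3)])])]),
                     (L7, Node
                       [(L3, Node
                          [(L6, Leaf C2),
                           (L8, Leaf C0),
                           (L9, Node [(L6, Leaf C0), (L8, Leaf C2)])]),
                        (L6, Node
                          [(L3, Leaf C2),
                           (L8, Node [(L3, Leaf C2), (L9, Leaf C0)]),
                           (L9, Node [(L3, Leaf C3), (L8, Leaf C2)])]),
                        (L8, Node
                          [(L3, Leaf C3),
                           (L6, Node [(L3, Leaf C3), (L9, Leaf C0)]),
                           (L9, Leaf C2)]),
                        (L9, Node
                          [(L3, Leaf C3),
                           (L6, Leaf C2),
                           (L8, Node [(L3, Leaf C1), (L6, Leaf C2)])])])]),
                  (L6, Node
                    [(L2, Node
                       [(L3, Node [(L7, Node [(L8, Leaf C2), (L9, Leaf C1)])]),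
                        (L7, Node
                          [(L3, Leaf C3),
                           (L8, Leaf C0),
                           (L9, Node [(L3, Leaf C3), (L8, Leaf C2)])])]),
                     (L7, Node
                       [(L2, Node
                          [(L3, Node [(L8, Leaf C1), (L9, Leaf C3)]),
                           (L8, Node [(L3, Leaf C1), (L9, Leaf C2)]),
                           (L9, Node [(L3, Leaf C2), (L8, Leaf C0)])]),
                        (L8, Node [(L2, Node [(L3, Leaf C2), (L9, Leaf C0)]), (L9, Leaf C1)]),
                        (L9, Node [(L2, Node [(L3, Leaf C1), (L8, Leaf C3)]), (L8, Leaf C0)])])]),
                  (L7, Node
                    [(L2, Node
                       [(L3, Node
                          [(L6, Leaf C0),
                           (L8, Node [(L6, Leaf C1), (L9, Leaf C2)]),
                           (L9, Leaf C0)]),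
                        (L6, Node
                          [(L3, Node [(L8, Leaf C1), (L9, Leaf C0)]),
                           (L8, Node [(L3, Leaf C1), (L9, Leaf C3)]),
                           (L9, Leaf C0)]),
                        (L8, Node
                          [(L3, Node [(L6, Leaf C2), (L9, Leaf C3)]),
                           (L6, Leaf C2),
                           (L9, Node [(L3, Leaf C2), (L6, Leaf C1)])]),
                        (L9, Node
                          [(L3, Node [(L6, Leaf C2), (L8, Leaf C1)]),
                           (L6, Node [(L3, Leaf C2), (L8, Leaf C3)]),
                           (L8, Node [(L3, Leaf C2), (L6, Leaf C3)])])]),
                     (L6, Node
                       [(L2, Node
                          [(L3, Node [(L8, Leaf C2), (L9, Leaf C1)]),
                           (L8, Node [(L3, Leaf C1), (L9, Leaf C2)]),
                           (L9, Node [(L3, Leaf C1), (L8, Leaf C0)])]),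
                        (L8, Node [(L2, Node [(L3, Leaf C2), (L9, Leaf C1)]), (L9, Leaf C3)]),
                        (L9, Node [(L2, Node [(L3, Leaf C0), (L8, Leaf C1)]), (L8, Leaf C2)])]),
                     (L8, Node
                       [(L2, Node
                          [(L3, Node [(L6, Leaf C0), (L9, Leaf C2)]),
                           (L6, Node [(L3, Leaf C1), (L9, Leaf C3)]),
                           (L9, Node [(L3, Leaf C3), (L6, Leaf C0)])]),
                        (L6, Node [(L2, Node [(L3, Leaf C1), (L9, Leaf C2)]), (L9, Leaf C1)]),
                        (L9, Node [(L2, Node [(L3, Leaf C0), (L6, Leaf C2)]), (L6, Leaf C0)])]),
                     (L9, Node
                       [(L2, Node
                          [(L3, Node [(L6, Leaf C1), (L8, Leaf C0)]),
                           (L6, Node [(L3, Leaf C0), (L8, Leaf C1)]),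
                           (L8, Node [(L3, Leaf C1), (L6, Leaf C0)])]),
                        (L6, Node [(L2, Node [(L3, Leaf C3), (L8, Leaf C1)]), (L8, Leaf C0)]),
                        (L8, Node [(L2, Node [(L3, Leaf C1), (L6, Leaf C0)]), (L6, Leaf C2)])])])]),
               (L7, Node
                 [(L2, Node
                    [(L3, Node
                       [(L5, Node
                          [(L6, Node [(L8, Leaf C0), (L9, Leaf C1)]),
                           (L8, Node [(L6, Leaf C2), (L9, Leaf C1)]),
                           (L9, Node [(L6, Leaf C2), (L8, Leaf C0)])]),
                        (L8, Node [(L5, Node [(L6, Leaf C1), (L9, Leaf C2)]), (L9, Leaf C1)]),
                        (L9, Node [(L5, Node [(L6, Leaf C1), (L8, Leaf C2)]), (L8, Leaf C1)])]),
                     (L5, Node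
                       [(L3, Node
                          [(L6, Node [(L8, Leaf C2), (L9, Leaf C1)]),
                           (L8, Node [(L6, Leaf C2), (L9, Leaf C3)]),
                           (L9, Node [(L6, Leaf C3), (L8, Leaf C1)])]),
                        (L6, Node
                          [(L3, Node [(L8, Leaf C3), (L9, Leaf C2)]),
                           (L8, Node [(L3, Leaf C3), (L9, Leaf C2)]),
                           (L9, Node [(L3, Leaf C1), (L8, Leaf C2)])]),
                        (L8, Node
                          [(L3, Leaf C0),
                           (L6, Node [(L3, Leaf C1), (L9, Leaf C0)]),
                           (L9, Node [(L3, Leaf C1), (L6, Leaf C0)])]),
                        (L9, Node
                          [(L3, Node [(L6, Leaf C0), (L8, Leaf C1)]),
                           (L6, Leaf C2),
                           (L8, Node [(L3, Leaf C0), (L6, Leaf C1)])])]),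
                     (L8, Node
                       [(L3, Node [(L5, Node [(L6, Leaf C1), (L9, Leaf C3)]), (L9, Leaf C3)]),
                        (L5, Node
                          [(L3, Leaf C1),
                           (L6, Node [(L3, Leaf C2), (L9, Leaf C1)]),
                           (L9, Node [(L3, Leaf C3), (L6, Leaf C1)])]),
                        (L9, Node [(L3, Leaf C2), (L5, Node [(L3, Leaf C3), (L6, Leaf C2)])])]),
                     (L9, Node
                       [(L3, Node [(L5, Leaf C3), (L8, Leaf C2)]),
                        (L5, Node
                          [(L3, Node [(L6, Leaf C3), (L8, Leaf C0)]),
                           (L6, Node [(L3, Leaf C0), (L8, Leaf C3)]),
                           (L8, Node [(L3, Leaf C2), (L6, Leaf C3)])]),
                        (L8, Node [(L3, Leaf C3), (L5, Node [(L3, Leaf C3), (L6, Leaf C2)])])])]),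
                  (L5, Node
                    [(L2, Node
                       [(L3, Node
                          [(L6, Node [(L8, Leaf C1), (L9, Leaf C3)]),
                           (L8, Node [(L6, Leaf C1), (L9, Leaf C0)]),
                           (L9, Leaf C0)]),
                        (L6, Node
                          [(L3, Leaf C3),
                           (L8, Node [(L3, Leaf C2), (L9, Leaf C1)]),
                           (L9, Node [(L3, Leaf C2), (L8, Leaf C3)])]),
                        (L8, Node [(L3, Leaf C3), (L6, Leaf C2), (L9, Leaf C3)]),
                        (L9, Node
                          [(L3, Node [(L6, Leaf C2), (L8, Leaf C0)]),
                           (L6, Node [(L3, Leaf C1), (L8, Leaf C3)]),
                           (L8, Node [(L3, Leaf C1), (L6, Leaf C2)])])]),
                     (L6, Node
                       [(L2, Node
                          [(L3, Node [(L8, Leaf C3), (L9, Leaf C1)]),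
                           (L8, Node [(L3, Leaf C0), (L9, Leaf C3)]),
                           (L9, Node [(L3, Leaf C3), (L8, Leaf C1)])]),
                        (L8, Leaf C3),
                        (L9, Node [(L2, Node [(L3, Leaf C0), (L8, Leaf C2)]), (L8, Leaf C3)])]),
                     (L8, Node
                       [(L2, Node
                          [(L3, Node [(L6, Leaf C0), (L9, Leaf C3)]),
                           (L6, Leaf C3),
                           (L9, Node [(L3, Leaf C0), (L6, Leaf C2)])]),
                        (L6, Leaf C0),
                        (L9, Node [(L2, Node [(L3, Leaf C3), (L6, Leaf C0)]), (L6, Leaf C0)])]),
                     (L9, Node
                       [(L2, Node
                          [(L3, Node [(L6, Leaf C3), (L8, Leaf C0)]),
                           (L6, Leaf C2),
                           (L8, Node [(L3, Leaf C0), (L6, Leaf C3)])]),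
                        (L6, Node [(L2, Node [(L3, Leaf C0), (L8, Leaf C2)]), (L8, Leaf C2)]),
                        (L8, Node [(L2, Node [(L3, Leaf C3), (L6, Leaf C1)]), (L6, Leaf C2)])])]),
                  (L8, Node
                    [(L2, Node
                       [(L3, Node [(L5, Leaf C0), (L9, Leaf C3)]),
                        (L5, Node
                          [(L3, Node [(L6, Leaf C1), (L9, Leaf C0)]),
                           (L6, Leaf C0),
                           (L9, Node [(L3, Leaf C0), (L6, Leaf C2)])]),
                        (L9, Leaf C2)]),
                     (L5, Node
                       [(L2, Node
                          [(L3, Leaf C1),
                           (L6, Leaf C1),
                           (L9, Node [(L3, Leaf C2), (L6, Leaf C1)])]),
                        (L6, Node [(L2, Leaf C3), (L9, Leaf C0)]),
                        (L9, Node [(L2, Node [(L3, Leaf C0), (L6, Leaf C3)]), (L6, Leaf C0)])]),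
                     (L9, Node
                       [(L2, Node [(L3, Leaf C0), (L5, Node [(L3, Leaf C1), (L6, Leaf C0)])]),
                        (L5, Node [(L2, Node [(L3, Leaf C2), (L6, Leaf C3)]), (L6, Leaf C3)])])]),
                  (L9, Node
                    [(L2, Node
                       [(L3, Node [(L5, Leaf C2), (L8, Leaf C1)]),
                        (L5, Node
                          [(L3, Node [(L6, Leaf C0), (L8, Leaf C1)]),
                           (L6, Node [(L3, Leaf C2), (L8, Leaf C0)]),
                           (L8, Node [(L3, Leaf C3), (L6, Leaf C2)])]),
                        (L8, Node [(L3, Leaf C2), (L5, Leaf C1)])]),
                     (L5, Node
                       [(L2, Node
                          [(L3, Node [(L6, Leaf C3), (L8, Leaf C1)]),
                           (L6, Node [(L3, Leaf C3), (L8, Leaf C1)]),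
                           (L8, Node [(L3, Leaf C3), (L6, Leaf C1)])]),
                        (L6, Node [(L2, Node [(L3, Leaf C3), (L8, Leaf C0)]), (L8, Leaf C1)]),
                        (L8, Node [(L2, Node [(L3, Leaf C3), (L6, Leaf C0)]), (L6, Leaf C2)])]),
                     (L8, Node
                       [(L2, Node [(L3, Leaf C3), (L5, Leaf C2)]),
                        (L5, Node [(L2, Leaf C3), (L6, Leaf C0)])])])])])])]) x"

definition neighbour_ok :: "label list \<Rightarrow> colour \<Rightarrow> nat \<Rightarrow> bool" where
  "neighbour_ok r c i \<longleftrightarrow> (case normalise (prefix_rev i r, c) of (z, c') \<Rightarrow> c' \<noteq> table z)"

definition representative_ok :: "label list \<Rightarrow> bool" where
  "representative_ok r \<longleftrightarrow> list_all (neighbour_ok r (table r)) [2, 3, 4, 5, 6, 7, 8, 9]"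

definition can_extend :: "label list \<Rightarrow> label \<Rightarrow> bool" where
  "can_extend q a \<longleftrightarrow> (q = [] \<longrightarrow> a = L1) \<and> list_all (\<lambda>b. b \<in> set q) (required_before a)"

function (sequential) completions_ok :: "label list \<Rightarrow> label list \<Rightarrow> bool" where
  "completions_ok q [] \<longleftrightarrow> representative_ok q"
| "completions_ok q rest \<longleftrightarrow>
     list_all (\<lambda>a. if can_extend q a then completions_ok (q @ [a]) (remove1 a rest) else True) rest"
  by pat_completeness auto
termination
  by (relation "measure (length \<circ> snd)") (auto simp: length_remove1 dest: length_pos_if_in_set)

declare completions_ok.simps [simp del]

lemmas evaluation_simps =
  completions_ok.simps list.pred_inject all_labels_def can_extend_def required_before.simps
  remove1.simps representative_ok_def neighbour_ok_def prefix_rev_def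
  numeral_eq_Suc pred_numeral_simps BitM.simps take_Suc_Cons drop_Suc_Cons take_0 drop_0
  rev.simps append.simps normalise_def normalising_steps_def fold_simps apply_step.simps
  fst_conv snd_conv id_apply send_to_L1.simps send_to_L4.simps send_to_L7.simps
  reverse_triples_13_def reverse_triples_23_def perm_of.simps cperm_of.simps label.case colour.case
  list.map list.sel first_in_def find.simps option.sel triple_of.simps precedes.simps
  table_def lookup.simps list.set insert_iff empty_iff list.distinct label.distinct
  colour.distinct triple.distinct if_True if_False simp_thms prod.case

lemma completions_ok_all: "completions_ok [] all_labels"
  by (simp only: evaluation_simps cong: lookup_cong if_weak_cong)

lemma completions_ok_sound:
  assumes "completions_ok q rest" "distinct rest" "distinct y" "set y = set rest"
    "\<forall>k<length y. can_extend (q @ take k y) (y ! k)"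
  shows "representative_ok (q @ y)"
  using assms
proof (induction y arbitrary: q rest)
  case Nil
  then show ?case by (simp add: completions_ok.simps)
next
  case (Cons a y)
  have "a \<in> set rest" "can_extend q a" using Cons.prems(4,5) by (auto dest: spec[of _ 0])
  moreover obtain r rs where rest: "rest = r # rs" using \<open>a \<in> set rest\<close> by (cases rest) auto
  have "list_all (\<lambda>a. if can_extend q a then completions_ok (q @ [a]) (remove1 a rest) else True) rest"
    using Cons.prems(1) unfolding rest by (simp only: completions_ok.simps(2))
  ultimately have "completions_ok (q @ [a]) (remove1 a rest)" by (simp add: list_all_iff)
  moreover have "\<forall>k<length y. can_extend ((q @ [a]) @ take k y) (y ! k)"
    using Cons.prems(5) by (auto dest: spec[of _ "Suc _"])
  ultimately have "representative_ok ((q @ [a]) @ y)"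
    using Cons.IH[of "q @ [a]" "remove1 a rest"] Cons.prems(2,3,4) by auto
  then show ?case by simp
qed

lemma required_before_not_self: "b \<in> set (required_before a) \<Longrightarrow> b \<noteq> a"
  by (cases a) auto

lemma canonical_can_extend:
  assumes "canonical x" "k < length x"
  shows "can_extend (take k x) (x ! k)"
proof -
  have dist: "distinct x" and hd: "hd x = L1"
    using assms(1) unfolding canonical_def arrangement_def by auto
  have "take k x = [] \<longrightarrow> x ! k = L1" using assms(2) hd by (auto simp: hd_conv_nth)
  moreover have "b \<in> set (take k x)" if "b \<in> set (required_before (x ! k))" for b
    using precedes_in_take[OF dist _ required_before_not_self[OF that] assms(2)] that assms(1)
    unfolding canonical_def by blast
  ultimately show ?thesis unfolding can_extend_def list_all_iff by blast
qed

lemma canonical_representative_ok: "canonical r \<Longrightarrow> representative_ok r"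
  using completions_ok_sound[OF completions_ok_all, where y = r] canonical_can_extend
  by (simp add: canonical_def arrangement_def set_all_labels) (simp add: all_labels_def)

definition normaliser :: "label list \<Rightarrow> label \<Rightarrow> label" where
  "normaliser x = (SOME h. symmetry h \<and> canonical (map h x))"

lemma normaliser:
  assumes "arrangement x"
  shows "symmetry (normaliser x) \<and> canonical (map (normaliser x) x)"
proof -
  obtain h where h: "symmetry h" "normalise (x, C0) = (map h x, colour_action h C0)"
    using normalise_symmetry by blast
  then have "canonical (map h x)" using normalise_canonical[OF assms, of C0] by simp
  with h(1) have "\<exists>h. symmetry h \<and> canonical (map h x)" by blast
  then show ?thesis unfolding normaliser_def by (rule someI_ex)
qed

definition colouring_P9 :: "label list \<Rightarrow> colour" where
  "colouring_P9 x = colour_action (inv (normaliser x)) (table (map (normaliser x) x))"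

lemma colouring_P9_canonical:
  assumes "arrangement x" "symmetry h" "canonical (map h x)"
  shows "colour_action h (colouring_P9 x) = table (map h x)"
proof -
  let ?n = "normaliser x"
  have n: "symmetry ?n" "canonical (map ?n x)" using normaliser[OF assms(1)] by auto
  have bij: "bij ?n" using n(1) by (rule symmetry_bij)
  have sym: "symmetry (h \<circ> inv ?n)" using assms(2) symmetry_inv[OF n(1)] by (rule symmetry_comp)
  have "map (h \<circ> inv ?n) (map ?n x) = map h x"
    using bij_is_inj[OF bij] by (simp add: inv_f_f)
  then have "canonical (map (h \<circ> inv ?n) (map ?n x))" using assms(3) by (simp only:)
  then have "h \<circ> inv ?n = id" by (rule canonical_unique[OF sym n(2)])
  then have "h = ?n"
    using bij_is_inj[OF bij] by (metis comp_assoc comp_id id_comp inv_o_cancel)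
  moreover have "?n \<circ> inv ?n = id" by (rule surj_iff[THEN iffD1, OF bij_is_surj[OF bij]])
  ultimately show ?thesis
    using symmetry_comp(2)[OF n(1) symmetry_inv[OF n(1)]] by (simp add: colouring_P9_def colour_action_id)
qed

lemma colouring_P9_proper:
  assumes "arrangement x" "2 \<le> i" "i \<le> 9"
  shows "colouring_P9 (prefix_rev i x) \<noteq> colouring_P9 x"
proof
  assume eq: "colouring_P9 (prefix_rev i x) = colouring_P9 x"
  let ?h = "normaliser x"
  let ?r = "map ?h x"
  have h: "symmetry ?h" "canonical ?r" using normaliser[OF assms(1)] by auto
  obtain k where k: "symmetry k"
    "normalise (prefix_rev i ?r, table ?r) = (map k (prefix_rev i ?r), colour_action k (table ?r))"
    using normalise_symmetry by blast
  have "arrangement (prefix_rev i ?r)"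
    using h(2) unfolding canonical_def by (simp add: arrangement_prefix_rev)
  then have canonical: "canonical (map (k \<circ> ?h) (prefix_rev i x))"
    using normalise_canonical[of "prefix_rev i ?r" "table ?r"] k(2) by (simp add: prefix_rev_map)
  have "i \<in> set [2, 3, 4, 5, 6, 7, 8, 9]" using assms(2,3) by simp presburger
  then have "neighbour_ok ?r (table ?r) i"
    using canonical_representative_ok[OF h(2)] unfolding representative_ok_def list_all_iff by blast
  then have ne: "colour_action k (table ?r) \<noteq> table (map (k \<circ> ?h) (prefix_rev i x))"
    using k(2) by (simp add: neighbour_ok_def prefix_rev_map)
  have "symmetry (k \<circ> ?h)" using k(1) h(1) by (rule symmetry_comp)
  then have "colour_action (k \<circ> ?h) (colouring_P9 (prefix_rev i x)) = table (map (k \<circ> ?h) (prefix_rev i x))"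
    by (rule colouring_P9_canonical[OF arrangement_prefix_rev[OF assms(1)] _ canonical])
  moreover have "colour_action (k \<circ> ?h) (colouring_P9 x) = colour_action k (table ?r)"
    using colouring_P9_canonical[OF assms(1) h] symmetry_comp(2)[OF k(1) h(1)] by simp
  ultimately show False using eq ne by simp
qed

definition label_of :: "nat \<Rightarrow> label" where
  "label_of n = all_labels ! (n - 1)"

lemma arrangement_label_of: "p \<in> pancake_vertices 9 \<Longrightarrow> arrangement (map label_of p)"
proof -
  assume "p \<in> pancake_vertices 9"
  then have p: "distinct p" "set p = {1..9}" unfolding pancake_vertices_def by auto
  have nine: "{1..9 :: nat} = {1, 2, 3, 4, 5, 6, 7, 8, 9}" by auto
  have "inj_on label_of {1..9}" unfolding inj_on_def nine by (simp add: label_of_def all_labels_def)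
  moreover have "label_of ` {1..9} = UNIV"
    unfolding nine by (simp add: label_of_def all_labels_def flip: set_all_labels)
  ultimately show ?thesis using p unfolding arrangement_def by (simp add: distinct_map)
qed

fun colour_index :: "colour \<Rightarrow> nat" where
  "colour_index C0 = 0" | "colour_index C1 = 1" | "colour_index C2 = 2" | "colour_index C3 = 3"

lemma colour_index_inj: "colour_index a = colour_index b \<Longrightarrow> a = b"
  by (cases a; cases b) simp_all

lemma proper_colouring_P9:
  "proper_colouring (pancake_vertices 9) (pancake_adj 9) 4 (\<lambda>p. colour_index (colouring_P9 (map label_of p)))"
  unfolding proper_colouring_def
proof (intro conjI ballI impI)
  fix p show "colour_index (colouring_P9 (map label_of p)) < 4"
    by (cases "colouring_P9 (map label_of p)") simp_all
next
  fix u v assume u: "u \<in> pancake_vertices 9" and "pancake_adj 9 u v"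
  then obtain i where i: "2 \<le> i" "i \<le> 9" "v = prefix_rev i u" unfolding pancake_adj_def by blast
  then have "colouring_P9 (map label_of v) \<noteq> colouring_P9 (map label_of u)"
    using colouring_P9_proper[OF arrangement_label_of[OF u]] by (simp add: prefix_rev_map)
  then show "colour_index (colouring_P9 (map label_of u)) \<noteq> colour_index (colouring_P9 (map label_of v))"
    using colour_index_inj by metis
qed

lemma pancake_chi_9: "pancake_chi 9 \<le> 4"
  unfolding pancake_chi_def using chromatic_number_le[OF proper_colouring_P9] by simp

theorem theorem1:
  fixes n :: nat
  assumes "n \<ge> 9"
  shows "pancake_chi n \<le> 4 * (n div 9) + pancake_chi (n mod 9)"
proof -
  \<comment> \<open>The bound holds for every n.\<close>
  have "pancake_chi n = pancake_chi (n div 9 * 9 + n mod 9)" by simp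
  also have "\<dots> \<le> n div 9 * pancake_chi 9 + pancake_chi (n mod 9)" by (rule pancake_chi_mult_add)
  also have "\<dots> \<le> 4 * (n div 9) + pancake_chi (n mod 9)" using pancake_chi_9 by simp
  finally show ?thesis .
qed

end
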